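(* Let $f_j(x,t)$ ($0\le j\le n+1$), $\psi_l(x,t)$, $\varphi_m(x,t)$ ($0\le l,m\le n$) be a compatible local solution of the two autonomous systems of ODEs (in $t$ and in $x$) described in the context, where the functions $a,b,c,d$ appearing in them are given by $$a=\frac{\psi_n}{f_{n+1}},\qquad b=-\frac{\varphi_n}{f_{n+1}},\qquad c=2i\left(\frac{\psi_nf_n}{f^2_{n+1}}-\frac{\psi_{n-1}}{f_{n+1}}\right),\qquad d=2i\left(\frac{\varphi_nf_n}{f^2_{n+1}}-\frac{\varphi_{n-1}}{f_{n+1}}\right).$$ Then the functions $a(x,t)$ and $b(x,t)$ are a local, infinitely differentiable in $x$ and $t$, solution of the nonlinear system $$i\dot a+a''+2a^2b=0,\qquad i\dot b-b''-2b^2a=0,$$ where the dot denotes $\partial/\partial t$ and the prime denotes $\partial/\partial x$.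
   Context: Fix $n\in\mathbb{N}$. One seeks polynomial-in-$z$ solutions $f(x,t,z)=\sum_{j=0}^{n+1}f_j(x,t)z^j$, $\psi(x,t,z)=\sum_{j=0}^{n}\psi_j(x,t)z^j$, $\varphi(x,t,z)=\sum_{j=0}^{n}\varphi_j(x,t)z^j$ of the linear systems $\dot f=(d+2izb)\psi-(c-2iza)\varphi$, $\dot\psi=-2(c-2iza)f-2i(2z^2-ab)\psi$, $\dot\varphi=2(d+2izb)f+2i(2z^2-ab)\varphi$, and $f'=ib\psi+ia\varphi$, $\psi'=2iaf-2iz\psi$, $\varphi'=2ibf+2iz\varphi$, with dot $=\partial_t$ and prime $=\partial_x$. In terms of coefficients (with the convention $f_j,\psi_l,\varphi_m=0$ for negative indices and for $j>n+1$, $l,m>n$) these become the $t$-system $\dot f_j=d\psi_j-c\varphi_j+2ib\psi_{j-1}+2ia\varphi_{j-1}$ ($0\le j\le n+1$), $\dot\psi_l=-2cf_l+4iaf_{l-1}+2iab\psi_l-4i\psi_{l-2}$ ($0\le l\le n$), $\dot\varphi_m=2df_m+4ibf_{m-1}-2iab\varphi_m+4i\varphi_{m-2}$ ($0\le m\le n$), and the $x$-system $f_j'=ib\psi_j+ia\varphi_j$ ($0\le j\le n+1$), $\psi_l'=2iaf_l-2i\psi_{l-1}$ ($0\le l\le n$), $\varphi_m'=2ibf_m+2i\varphi_{m-1}$ ($0\le m\le n$). Requiring polynomial solutions forces $a,b,c,d$ to be given by the formulas in the claim; substituting them, both systems become closed autonomous ODE systems in the $N+1=3n+2$ unknowns $(f_0,\dots,f_{n+1},\psi_0,\dots,\psi_n,\varphi_0,\dots,\varphi_n)$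 with polynomial right-hand sides. The two systems satisfy the Frobenius compatibility conditions, so they admit a common (compatible) local solution. A consequence of the systems is that $f_{n+1}$ is constant in $x$ and $t$. *)

theory Defs
  imports "HOL-Analysis.Analysis"
begin

text \<open>Points of the (x,t)-plane are pairs p = (x,t) :: real \<times> real; all unknowns are
complex valued.  The unknowns f_0..f_{n+1}, psi_0..psi_n, phi_0..phi_n are given as
F, P, Q :: nat \<Rightarrow> real \<times> real \<Rightarrow> complex (only the indices in range matter).\<close>

definition ext :: "nat \<Rightarrow> (nat \<Rightarrow> 'a \<Rightarrow> complex) \<Rightarrow> int \<Rightarrow> 'a \<Rightarrow> complex" where
  "ext N g j p = (if 0 \<le> j \<and> j \<le> int N then g (nat j) p else 0)"

type_synonym field2 = "nat \<Rightarrow> real \<times> real \<Rightarrow> complex"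

definition coef_a :: "nat \<Rightarrow> field2 \<Rightarrow> field2 \<Rightarrow> field2 \<Rightarrow> real \<times> real \<Rightarrow> complex" where
  "coef_a n F P Q p = P n p / F (n+1) p"

definition coef_b :: "nat \<Rightarrow> field2 \<Rightarrow> field2 \<Rightarrow> field2 \<Rightarrow> real \<times> real \<Rightarrow> complex" where
  "coef_b n F P Q p = - (Q n p / F (n+1) p)"

definition coef_c :: "nat \<Rightarrow> field2 \<Rightarrow> field2 \<Rightarrow> field2 \<Rightarrow> real \<times> real \<Rightarrow> complex" where
  "coef_c n F P Q p = 2 * \<i> * (P n p * F n p / (F (n+1) p)^2 - ext n P (int n - 1) p / F (n+1) p)"

definition coef_d :: "nat \<Rightarrow> field2 \<Rightarrow> field2 \<Rightarrow> field2 \<Rightarrow> real \<times> real \<Rightarrow> complex" where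
  "coef_d n F P Q p = 2 * \<i> * (Q n p * F n p / (F (n+1) p)^2 - ext n Q (int n - 1) p / F (n+1) p)"

definition tF :: "nat \<Rightarrow> field2 \<Rightarrow> field2 \<Rightarrow> field2 \<Rightarrow> nat \<Rightarrow> real \<times> real \<Rightarrow> complex" where
  "tF n F P Q j p =
     (let a = coef_a n F P Q p; b = coef_b n F P Q p; c = coef_c n F P Q p; d = coef_d n F P Q p;
          ps = (\<lambda>k. ext n P k p); ph = (\<lambda>k. ext n Q k p)
      in d * ps (int j) - c * ph (int j) + 2*\<i>*b * ps (int j - 1) + 2*\<i>*a * ph (int j - 1))"

definition tP :: "nat \<Rightarrow> field2 \<Rightarrow> field2 \<Rightarrow> field2 \<Rightarrow> nat \<Rightarrow> real \<times> real \<Rightarrow> complex" where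
  "tP n F P Q l p =
     (let a = coef_a n F P Q p; b = coef_b n F P Q p; c = coef_c n F P Q p;
          f = (\<lambda>k. ext (n+1) F k p); ps = (\<lambda>k. ext n P k p)
      in - 2 * c * f (int l) + 4*\<i>*a * f (int l - 1) + 2*\<i>*a*b * ps (int l) - 4*\<i> * ps (int l - 2))"

definition tQ :: "nat \<Rightarrow> field2 \<Rightarrow> field2 \<Rightarrow> field2 \<Rightarrow> nat \<Rightarrow> real \<times> real \<Rightarrow> complex" where
  "tQ n F P Q m p =
     (let a = coef_a n F P Q p; b = coef_b n F P Q p; d = coef_d n F P Q p;
          f = (\<lambda>k. ext (n+1) F k p); ph = (\<lambda>k. ext n Q k p)
      in 2 * d * f (int m) + 4*\<i>*b * f (int m - 1) - 2*\<i>*a*b * ph (int m) + 4*\<i> * ph (int m - 2))"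

definition xF :: "nat \<Rightarrow> field2 \<Rightarrow> field2 \<Rightarrow> field2 \<Rightarrow> nat \<Rightarrow> real \<times> real \<Rightarrow> complex" where
  "xF n F P Q j p = \<i> * coef_b n F P Q p * ext n P (int j) p + \<i> * coef_a n F P Q p * ext n Q (int j) p"

definition xP :: "nat \<Rightarrow> field2 \<Rightarrow> field2 \<Rightarrow> field2 \<Rightarrow> nat \<Rightarrow> real \<times> real \<Rightarrow> complex" where
  "xP n F P Q l p = 2*\<i> * coef_a n F P Q p * ext (n+1) F (int l) p - 2*\<i> * ext n P (int l - 1) p"

definition xQ :: "nat \<Rightarrow> field2 \<Rightarrow> field2 \<Rightarrow> field2 \<Rightarrow> nat \<Rightarrow> real \<times> real \<Rightarrow> complex" where
  "xQ n F P Q m p = 2*\<i> * coef_b n F P Q p * ext (n+1) F (int m) p + 2*\<i> * ext n Q (int m - 1) p"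

definition has_partials :: "(real \<times> real \<Rightarrow> complex) \<Rightarrow> complex \<Rightarrow> complex \<Rightarrow> real \<times> real \<Rightarrow> bool" where
  "has_partials g gx gt p \<longleftrightarrow> (g has_derivative (\<lambda>h. fst h *\<^sub>R gx + snd h *\<^sub>R gt)) (at p)"

definition compatible_solution ::
  "nat \<Rightarrow> (real \<times> real) set \<Rightarrow> field2 \<Rightarrow> field2 \<Rightarrow> field2 \<Rightarrow> bool" where
  "compatible_solution n U F P Q \<longleftrightarrow>
     (\<forall>p\<in>U.
        (\<forall>j\<le>n+1. has_partials (F j) (xF n F P Q j p) (tF n F P Q j p) p) \<and>
        (\<forall>l\<le>n. has_partials (P l) (xP n F P Q l p) (tP n F P Q l p) p) \<and>
        (\<forall>m\<le>n. has_partials (Q m) (xQ n F P Q m p) (tQ n F P Q m p) p))"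

fun Ck_on :: "nat \<Rightarrow> (real \<times> real) set \<Rightarrow> (real \<times> real \<Rightarrow> complex) \<Rightarrow> bool" where
  "Ck_on 0 U g = continuous_on U g"
| "Ck_on (Suc k) U g =
     (\<exists>gx gt. (\<forall>p\<in>U. has_partials g (gx p) (gt p) p) \<and> Ck_on k U gx \<and> Ck_on k U gt)"

definition smooth_on2 :: "(real \<times> real) set \<Rightarrow> (real \<times> real \<Rightarrow> complex) \<Rightarrow> bool" where
  "smooth_on2 U g \<longleftrightarrow> (\<forall>k. Ck_on k U g)"

end

theory Submission
  imports Defs
begin

text \<open>For j = n+1 both systems say that f_{n+1} has vanishing partial derivatives, the
  t-equation reducing to d psi_{n+1} - c phi_{n+1} + 2i(b psi_n + a phi_n) = 0 by the choice of a
  and b.  Hence a = psi_n / f_{n+1} inherits its derivatives from psi_n: the x-system gives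
  a' = c and the t-system gives the time derivative, and differentiating c once more with the
  x-system expresses i a_t + a'' + 2 a^2 b as a rational expression in the unknowns that vanishes
  identically; likewise for b.  Smoothness follows by bootstrapping: if all unknowns are C^k, so
  are the right-hand sides of both systems, which are the partial derivatives of the unknowns.\<close>

subsection \<open>Calculus of partial derivatives in the plane\<close>

lemma has_partials_const: "has_partials (\<lambda>p. c) 0 0 p"
  unfolding has_partials_def by simp

lemma has_partials_add:
  assumes "has_partials f fx ft p" and "has_partials g gx gt p"
  shows "has_partials (\<lambda>p. f p + g p) (fx + gx) (ft + gt) p"
  using has_derivative_add[OF assms[unfolded has_partials_def]]
  unfolding has_partials_def by (simp add: scaleR_add_right add_ac)

lemma has_partials_mult:
  assumes "has_partials f fx ft p" and "has_partials g gx gt p"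
  shows "has_partials (\<lambda>p. f p * g p) (fx * g p + f p * gx) (ft * g p + f p * gt) p"
  using has_derivative_mult[OF assms[unfolded has_partials_def]]
  unfolding has_partials_def by (simp add: scaleR_conv_of_real algebra_simps)

lemma has_partials_inverse:
  assumes "has_partials g gx gt p" and "g p \<noteq> 0"
  shows "has_partials (\<lambda>p. inverse (g p))
           (- (inverse (g p) * gx * inverse (g p))) (- (inverse (g p) * gt * inverse (g p))) p"
  using Deriv.has_derivative_inverse[OF assms(2) assms(1)[unfolded has_partials_def]]
  unfolding has_partials_def by (simp add: scaleR_conv_of_real algebra_simps)

lemma has_partials_divide:
  assumes "has_partials f fx ft p" and "has_partials g gx gt p" and "g p \<noteq> 0"
  shows "has_partials (\<lambda>p. f p / g p)
           (fx / g p - f p * gx / (g p)\<^sup>2) (ft / g p - f p * gt / (g p)\<^sup>2) p"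
  using has_partials_mult[OF assms(1) has_partials_inverse[OF assms(2,3)]] assms(3)
  by (simp add: divide_inverse power2_eq_square algebra_simps)

lemma has_partials_cmult:
  assumes "has_partials f fx ft p"
  shows "has_partials (\<lambda>p. c * f p) (c * fx) (c * ft) p"
  using has_partials_mult[OF has_partials_const assms] by simp

lemma has_partials_uminus:
  assumes "has_partials f fx ft p"
  shows "has_partials (\<lambda>p. - f p) (- fx) (- ft) p"
  using has_partials_cmult[OF assms, of "-1"] by simp

lemma has_partials_diff:
  assumes "has_partials f fx ft p" and "has_partials g gx gt p"
  shows "has_partials (\<lambda>p. f p - g p) (fx - gx) (ft - gt) p"
  using has_partials_add[OF assms(1) has_partials_uminus[OF assms(2)]] by simp

lemma has_partials_imp_isCont: "has_partials g gx gt p \<Longrightarrow> isCont g p"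
  unfolding has_partials_def using has_derivative_continuous by blast

lemma has_partials_imp_has_vector_derivative_x:
  assumes "has_partials g gx gt (x, t)"
  shows "((\<lambda>y. g (y, t)) has_vector_derivative gx) (at x)"
proof -
  have "((\<lambda>y. (y, t)) has_derivative (\<lambda>h. (h, 0))) (at x)"
    by (auto intro!: derivative_eq_intros)
  from has_derivative_compose[OF this assms[unfolded has_partials_def]]
  show ?thesis by (simp add: o_def has_vector_derivative_def)
qed

lemma has_partials_imp_has_vector_derivative_t:
  assumes "has_partials g gx gt (x, t)"
  shows "((\<lambda>s. g (x, s)) has_vector_derivative gt) (at t)"
proof -
  have "((\<lambda>s. (x, s)) has_derivative (\<lambda>h. (0, h))) (at t)"
    by (auto intro!: derivative_eq_intros)
  from has_derivative_compose[OF this assms[unfolded has_partials_def]]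
  show ?thesis by (simp add: o_def has_vector_derivative_def)
qed

lemma has_partials_ext:
  assumes "\<forall>l\<le>N. has_partials (g l) (gx l) (gt l) p"
  shows "has_partials (ext N g j)
           (if 0 \<le> j \<and> j \<le> int N then gx (nat j) else 0)
           (if 0 \<le> j \<and> j \<le> int N then gt (nat j) else 0) p"
proof (cases "0 \<le> j \<and> j \<le> int N")
  case True
  then have "ext N g j = g (nat j)" and "nat j \<le> N"
    by (auto simp: ext_def fun_eq_iff)
  with True assms show ?thesis by simp
next
  case False
  then have "ext N g j = (\<lambda>p. 0)" by (auto simp: ext_def fun_eq_iff)
  with False show ?thesis by (auto simp: has_partials_const)
qed

subsection \<open>Functions of class \<open>C\<^sup>k\<close> in the plane\<close>

lemma Ck_on_SucI:
  assumes "\<forall>p\<in>U. has_partials g (gx p) (gt p) p"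
    and "Ck_on k U gx" and "Ck_on k U gt"
  shows "Ck_on (Suc k) U g"
proof -
  have "(\<forall>p\<in>U. has_partials g (gx p) (gt p) p) \<and> Ck_on k U gx \<and> Ck_on k U gt"
    using assms by blast
  then show ?thesis
    unfolding Ck_on.simps by (rule exI[of _ gx, OF exI[of _ gt]])
qed

lemma Ck_on_SucE:
  assumes "Ck_on (Suc k) U g"
  obtains gx gt where "\<forall>p\<in>U. has_partials g (gx p) (gt p) p"
    and "Ck_on k U gx" and "Ck_on k U gt"
  using assms by (simp only: Ck_on.simps) blast

text \<open>Unfolding C^{k+1} produces existentials over derivative functions, which the simplifier
  cannot instantiate; the rules above are used instead.\<close>
declare Ck_on.simps(2) [simp del]

lemma Ck_on_Suc_imp_Ck_on: "Ck_on (Suc k) U g \<Longrightarrow> Ck_on k U g"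
proof (induction k arbitrary: g)
  case 0
  then obtain gx gt where "\<forall>p\<in>U. has_partials g (gx p) (gt p) p"
    and "Ck_on 0 U gx" and "Ck_on 0 U gt"
    by (rule Ck_on_SucE)
  then show ?case
    unfolding Ck_on.simps(1) by (meson continuous_at_imp_continuous_on has_partials_imp_isCont)
next
  case (Suc k)
  obtain gx gt where
    g: "\<forall>p\<in>U. has_partials g (gx p) (gt p) p" "Ck_on (Suc k) U gx" "Ck_on (Suc k) U gt"
    using Suc.prems by (rule Ck_on_SucE)
  show ?case
    using g(1) Suc.IH[OF g(2)] Suc.IH[OF g(3)] by (rule Ck_on_SucI)
qed

lemma Ck_on_const: "Ck_on k U (\<lambda>p. c)"
proof (induction k arbitrary: c)
  case (Suc k)
  show ?case
    by (rule Ck_on_SucI[where gx="\<lambda>p. 0" and gt="\<lambda>p. 0"])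
      (simp_all add: has_partials_const Suc.IH)
qed simp

lemma Ck_on_add: "Ck_on k U f \<Longrightarrow> Ck_on k U g \<Longrightarrow> Ck_on k U (\<lambda>p. f p + g p)"
proof (induction k arbitrary: f g)
  case 0
  then show ?case by (auto intro: continuous_on_add)
next
  case (Suc k)
  obtain fx ft where
    f: "\<forall>p\<in>U. has_partials f (fx p) (ft p) p" "Ck_on k U fx" "Ck_on k U ft"
    using Suc.prems(1) by (rule Ck_on_SucE)
  obtain gx gt where
    g: "\<forall>p\<in>U. has_partials g (gx p) (gt p) p" "Ck_on k U gx" "Ck_on k U gt"
    using Suc.prems(2) by (rule Ck_on_SucE)
  show ?case
    by (rule Ck_on_SucI[where gx="\<lambda>p. fx p + gx p" and gt="\<lambda>p. ft p + gt p"])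
      (simp_all add: f g has_partials_add Suc.IH)
qed

lemma Ck_on_mult: "Ck_on k U f \<Longrightarrow> Ck_on k U g \<Longrightarrow> Ck_on k U (\<lambda>p. f p * g p)"
proof (induction k arbitrary: f g)
  case 0
  then show ?case by (auto intro: continuous_on_mult)
next
  case (Suc k)
  obtain fx ft where
    f: "\<forall>p\<in>U. has_partials f (fx p) (ft p) p" "Ck_on k U fx" "Ck_on k U ft"
    using Suc.prems(1) by (rule Ck_on_SucE)
  obtain gx gt where
    g: "\<forall>p\<in>U. has_partials g (gx p) (gt p) p" "Ck_on k U gx" "Ck_on k U gt"
    using Suc.prems(2) by (rule Ck_on_SucE)
  have "Ck_on k U f" "Ck_on k U g"
    using Suc.prems by (simp_all only: Ck_on_Suc_imp_Ck_on)
  then show ?case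
    by (intro Ck_on_SucI[where gx="\<lambda>p. fx p * g p + f p * gx p"
                          and gt="\<lambda>p. ft p * g p + f p * gt p"])
      (simp_all add: f g has_partials_mult Ck_on_add Suc.IH)
qed

lemma Ck_on_uminus: "Ck_on k U f \<Longrightarrow> Ck_on k U (\<lambda>p. - f p)"
  using Ck_on_mult[OF Ck_on_const[of k U "-1"]] by simp

lemma Ck_on_diff: "Ck_on k U f \<Longrightarrow> Ck_on k U g \<Longrightarrow> Ck_on k U (\<lambda>p. f p - g p)"
  using Ck_on_add[OF _ Ck_on_uminus] by simp

lemma Ck_on_inverse:
  "Ck_on k U g \<Longrightarrow> \<forall>p\<in>U. g p \<noteq> 0 \<Longrightarrow> Ck_on k U (\<lambda>p. inverse (g p))"
proof (induction k arbitrary: g)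
  case 0
  then show ?case by (auto intro: continuous_on_inverse)
next
  case (Suc k)
  obtain gx gt where
    g: "\<forall>p\<in>U. has_partials g (gx p) (gt p) p" "Ck_on k U gx" "Ck_on k U gt"
    using Suc.prems(1) by (rule Ck_on_SucE)
  have "Ck_on k U (\<lambda>p. inverse (g p))"
    using Suc.IH[OF Ck_on_Suc_imp_Ck_on[OF Suc.prems(1)] Suc.prems(2)] .
  then show ?case
    by (intro Ck_on_SucI[where gx="\<lambda>p. - (inverse (g p) * gx p * inverse (g p))"
                          and gt="\<lambda>p. - (inverse (g p) * gt p * inverse (g p))"])
      (simp_all add: g Suc.prems(2) has_partials_inverse Ck_on_uminus Ck_on_mult)
qed

lemma Ck_on_divide:
  "Ck_on k U f \<Longrightarrow> Ck_on k U g \<Longrightarrow> \<forall>p\<in>U. g p \<noteq> 0 \<Longrightarrow> Ck_on k U (\<lambda>p. f p / g p)"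
  using Ck_on_mult[OF _ Ck_on_inverse] by (simp add: divide_inverse)

lemma Ck_on_power: "Ck_on k U f \<Longrightarrow> Ck_on k U (\<lambda>p. f p ^ m)"
  by (induction m) (simp_all add: Ck_on_const Ck_on_mult)

lemma Ck_on_ext:
  assumes "\<And>i. i \<le> N \<Longrightarrow> Ck_on k U (g i)"
  shows "Ck_on k U (ext N g j)"
proof (cases "0 \<le> j \<and> j \<le> int N")
  case True
  then have "ext N g j = g (nat j)" and "nat j \<le> N"
    by (auto simp: ext_def fun_eq_iff)
  with assms show ?thesis by simp
next
  case False
  then have "ext N g j = (\<lambda>p. 0)" by (auto simp: ext_def fun_eq_iff)
  then show ?thesis by (simp add: Ck_on_const)
qed

definition solves_at :: "nat \<Rightarrow> field2 \<Rightarrow> field2 \<Rightarrow> field2 \<Rightarrow> real \<times> real \<Rightarrow> bool" where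
  "solves_at n F P Q p \<longleftrightarrow>
     (\<forall>j\<le>n+1. has_partials (F j) (xF n F P Q j p) (tF n F P Q j p) p) \<and>
     (\<forall>l\<le>n. has_partials (P l) (xP n F P Q l p) (tP n F P Q l p) p) \<and>
     (\<forall>m\<le>n. has_partials (Q m) (xQ n F P Q m p) (tQ n F P Q m p) p)"

lemma compatible_solution_iff_solves_at:
  "compatible_solution n U F P Q \<longleftrightarrow> (\<forall>p\<in>U. solves_at n F P Q p)"
  unfolding compatible_solution_def solves_at_def ..

lemma Ck_on_system_rhs:
  assumes F: "\<forall>j\<le>n+1. Ck_on k U (F j)" and P: "\<forall>l\<le>n. Ck_on k U (P l)"
    and Q: "\<forall>m\<le>n. Ck_on k U (Q m)" and top: "\<forall>p\<in>U. F (n+1) p \<noteq> 0"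
  shows "Ck_on k U (xF n F P Q j)" "Ck_on k U (tF n F P Q j)"
    "Ck_on k U (xP n F P Q j)" "Ck_on k U (tP n F P Q j)"
    "Ck_on k U (xQ n F P Q j)" "Ck_on k U (tQ n F P Q j)"
proof -
  note rules = Ck_on_add Ck_on_mult Ck_on_diff Ck_on_uminus Ck_on_divide Ck_on_power
    Ck_on_ext Ck_on_const
  have top': "\<forall>p\<in>U. F (Suc n) p \<noteq> 0"
    using top by simp
  have coef: "Ck_on k U (coef_a n F P Q)" "Ck_on k U (coef_b n F P Q)"
    "Ck_on k U (coef_c n F P Q)" "Ck_on k U (coef_d n F P Q)"
    unfolding coef_a_def[abs_def] coef_b_def[abs_def] coef_c_def[abs_def] coef_d_def[abs_def]
    by (intro rules; simp add: F P Q top')+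
  show "Ck_on k U (xF n F P Q j)" "Ck_on k U (tF n F P Q j)"
    "Ck_on k U (xP n F P Q j)" "Ck_on k U (tP n F P Q j)"
    "Ck_on k U (xQ n F P Q j)" "Ck_on k U (tQ n F P Q j)"
    unfolding xF_def[abs_def] tF_def[abs_def] xP_def[abs_def] tP_def[abs_def]
      xQ_def[abs_def] tQ_def[abs_def] Let_def
    by (intro rules coef; simp add: F P Q)+
qed

lemma solves_at_Ck_on:
  assumes sol: "\<forall>p\<in>U. solves_at n F P Q p" and top: "\<forall>p\<in>U. F (n+1) p \<noteq> 0"
  shows "(\<forall>j\<le>n+1. Ck_on k U (F j)) \<and> (\<forall>l\<le>n. Ck_on k U (P l)) \<and> (\<forall>m\<le>n. Ck_on k U (Q m))"
proof (induction k)
  case 0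
  from sol have "\<forall>p\<in>U. (\<forall>j\<le>n+1. isCont (F j) p) \<and> (\<forall>l\<le>n. isCont (P l) p) \<and> (\<forall>m\<le>n. isCont (Q m) p)"
    unfolding solves_at_def by (meson has_partials_imp_isCont)
  then show ?case
    by (auto intro!: continuous_at_imp_continuous_on)
next
  case (Suc k)
  then have "\<forall>j\<le>n+1. Ck_on k U (F j)" "\<forall>l\<le>n. Ck_on k U (P l)" "\<forall>m\<le>n. Ck_on k U (Q m)"
    by simp_all
  note rhs = Ck_on_system_rhs[OF this top]
  show ?case
  proof (intro conjI allI impI)
    fix j assume "j \<le> n+1"
    with sol show "Ck_on (Suc k) U (F j)"
      unfolding solves_at_def by (intro Ck_on_SucI[OF _ rhs(1,2)]) blast
  next
    fix l assume "l \<le> n"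
    with sol show "Ck_on (Suc k) U (P l)"
      unfolding solves_at_def by (intro Ck_on_SucI[OF _ rhs(3,4)]) blast
  next
    fix m assume "m \<le> n"
    with sol show "Ck_on (Suc k) U (Q m)"
      unfolding solves_at_def by (intro Ck_on_SucI[OF _ rhs(5,6)]) blast
  qed
qed

lemma smooth_on2_coef_a_coef_b:
  assumes "\<forall>p\<in>U. solves_at n F P Q p" and top: "\<forall>p\<in>U. F (n+1) p \<noteq> 0"
  shows "smooth_on2 U (coef_a n F P Q)" "smooth_on2 U (coef_b n F P Q)"
proof -
  have "Ck_on k U (P n)" "Ck_on k U (Q n)" "Ck_on k U (F (n+1))" for k
    using solves_at_Ck_on[OF assms, of k] by simp_all
  with top show "smooth_on2 U (coef_a n F P Q)" "smooth_on2 U (coef_b n F P Q)"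
    unfolding smooth_on2_def coef_a_def[abs_def] coef_b_def[abs_def]
    by (simp_all add: Ck_on_divide Ck_on_uminus)
qed

subsection \<open>The nonlinear system for a and b\<close>

lemma solves_at_top_stationary:
  assumes sol: "solves_at n F P Q p" and top: "F (n+1) p \<noteq> 0"
  shows "has_partials (F (n+1)) 0 0 p"
proof -
  have "xF n F P Q (n+1) p = 0"
    by (simp add: xF_def ext_def)
  moreover have "tF n F P Q (n+1) p = 0"
    using top by (simp add: tF_def ext_def coef_a_def coef_b_def Let_def field_simps)
  moreover have "has_partials (F (n+1)) (xF n F P Q (n+1) p) (tF n F P Q (n+1) p) p"
    using sol by (simp add: solves_at_def)
  ultimately show ?thesis by simp
qed

lemma coef_a_partials:
  assumes sol: "solves_at n F P Q p" and top: "F (n+1) p \<noteq> 0"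
  shows "has_partials (coef_a n F P Q) (coef_c n F P Q p) (tP n F P Q n p / F (n+1) p) p"
proof -
  have "has_partials (P n) (xP n F P Q n p) (tP n F P Q n p) p"
    using sol by (simp add: solves_at_def)
  from has_partials_divide[OF this solves_at_top_stationary[OF sol top] top]
  have "has_partials (\<lambda>q. P n q / F (n+1) q) (xP n F P Q n p / F (n+1) p) (tP n F P Q n p / F (n+1) p) p"
    by simp
  moreover have "xP n F P Q n p / F (n+1) p = coef_c n F P Q p"
    using top by (simp add: xP_def coef_a_def coef_c_def ext_def field_simps power2_eq_square)
  ultimately show ?thesis
    by (simp add: coef_a_def[abs_def])
qed

lemma coef_b_partials:
  assumes sol: "solves_at n F P Q p" and top: "F (n+1) p \<noteq> 0"
  shows "has_partials (coef_b n F P Q) (coef_d n F P Q p) (- (tQ n F P Q n p / F (n+1) p)) p"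
proof -
  have "has_partials (Q n) (xQ n F P Q n p) (tQ n F P Q n p) p"
    using sol by (simp add: solves_at_def)
  from has_partials_uminus[OF has_partials_divide[OF this solves_at_top_stationary[OF sol top] top]]
  have "has_partials (\<lambda>q. - (Q n q / F (n+1) q))
          (- (xQ n F P Q n p / F (n+1) p)) (- (tQ n F P Q n p / F (n+1) p)) p"
    by simp
  moreover have "- (xQ n F P Q n p / F (n+1) p) = coef_d n F P Q p"
    using top by (simp add: xQ_def coef_b_def coef_d_def ext_def field_simps power2_eq_square)
  ultimately show ?thesis
    by (simp add: coef_b_def[abs_def])
qed

lemma coef_a_nls_equation:
  assumes sol: "solves_at n F P Q p" and top: "F (n+1) p \<noteq> 0"
  shows "\<exists>axx ct. has_partials (coef_c n F P Q) axx ct p \<and>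
           \<i> * (tP n F P Q n p / F (n+1) p) + axx + 2 * (coef_a n F P Q p)\<^sup>2 * coef_b n F P Q p = 0"
proof -
  have F: "\<forall>j\<le>n+1. has_partials (F j) (xF n F P Q j p) (tF n F P Q j p) p"
    and P: "\<forall>l\<le>n. has_partials (P l) (xP n F P Q l p) (tP n F P Q l p) p"
    using sol by (simp_all add: solves_at_def)
  have Ftop: "has_partials (F (n+1)) 0 0 p"
    by (rule solves_at_top_stationary[OF sol top])
  obtain prev_t where prev: "has_partials (ext n P (int n - 1))
      (2*\<i>*coef_a n F P Q p * ext (n+1) F (int n - 1) p - 2*\<i>*ext n P (int n - 2) p) prev_t p"
  proof -
    from has_partials_ext[OF P, of "int n - 1"] show ?thesis
      by (cases n) (auto simp: xP_def ext_def intro: that)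
  qed
  \<comment> \<open>c' by the quotient rule, with f_{n+1}' = 0 and psi_{n-1}' taken from the x-system\<close>
  define cx where "cx = 2*\<i>*((xP n F P Q n p * F n p + P n p * xF n F P Q n p) / (F (n+1) p)\<^sup>2
      - (2*\<i>*coef_a n F P Q p * ext (n+1) F (int n - 1) p - 2*\<i>*ext n P (int n - 2) p) / F (n+1) p)"
  have "coef_c n F P Q = (\<lambda>q. 2 * \<i> * (P n q * F n q / (F (n+1) q * F (n+1) q)
                                       - ext n P (int n - 1) q / F (n+1) q))"
    by (simp add: fun_eq_iff coef_c_def power2_eq_square)
  with has_partials_cmult[OF has_partials_diff[OF
         has_partials_divide[OF has_partials_mult[OF P[rule_format, of n] F[rule_format, of n]]
                                has_partials_mult[OF Ftop Ftop]]
         has_partials_divide[OF prev Ftop top]], of "2 * \<i>"]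
  have "\<exists>ct. has_partials (coef_c n F P Q) cx ct p"
    using top by (auto simp: cx_def power2_eq_square)
  moreover have "\<i> * (tP n F P Q n p / F (n+1) p) + cx + 2 * (coef_a n F P Q p)\<^sup>2 * coef_b n F P Q p = 0"
    using top unfolding cx_def
    by (simp add: tP_def xP_def xF_def coef_a_def coef_b_def coef_c_def ext_def Let_def
        field_simps power2_eq_square)
  ultimately show ?thesis
    by blast
qed

lemma coef_b_nls_equation:
  assumes sol: "solves_at n F P Q p" and top: "F (n+1) p \<noteq> 0"
  shows "\<exists>bxx dt. has_partials (coef_d n F P Q) bxx dt p \<and>
           \<i> * (- (tQ n F P Q n p / F (n+1) p)) - bxx - 2 * (coef_b n F P Q p)\<^sup>2 * coef_a n F P Q p = 0"
proof -
  have F: "\<forall>j\<le>n+1. has_partials (F j) (xF n F P Q j p) (tF n F P Q j p) p"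
    and Q: "\<forall>m\<le>n. has_partials (Q m) (xQ n F P Q m p) (tQ n F P Q m p) p"
    using sol by (simp_all add: solves_at_def)
  have Ftop: "has_partials (F (n+1)) 0 0 p"
    by (rule solves_at_top_stationary[OF sol top])
  obtain prev_t where prev: "has_partials (ext n Q (int n - 1))
      (2*\<i>*coef_b n F P Q p * ext (n+1) F (int n - 1) p + 2*\<i>*ext n Q (int n - 2) p) prev_t p"
  proof -
    from has_partials_ext[OF Q, of "int n - 1"] show ?thesis
      by (cases n) (auto simp: xQ_def ext_def intro: that)
  qed
  \<comment> \<open>d' by the quotient rule, with f_{n+1}' = 0 and phi_{n-1}' taken from the x-system\<close>
  define dx where "dx = 2*\<i>*((xQ n F P Q n p * F n p + Q n p * xF n F P Q n p) / (F (n+1) p)\<^sup>2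
      - (2*\<i>*coef_b n F P Q p * ext (n+1) F (int n - 1) p + 2*\<i>*ext n Q (int n - 2) p) / F (n+1) p)"
  have "coef_d n F P Q = (\<lambda>q. 2 * \<i> * (Q n q * F n q / (F (n+1) q * F (n+1) q)
                                       - ext n Q (int n - 1) q / F (n+1) q))"
    by (simp add: fun_eq_iff coef_d_def power2_eq_square)
  with has_partials_cmult[OF has_partials_diff[OF
         has_partials_divide[OF has_partials_mult[OF Q[rule_format, of n] F[rule_format, of n]]
                                has_partials_mult[OF Ftop Ftop]]
         has_partials_divide[OF prev Ftop top]], of "2 * \<i>"]
  have "\<exists>dt. has_partials (coef_d n F P Q) dx dt p"
    using top by (auto simp: dx_def power2_eq_square)
  moreover have "\<i> * (- (tQ n F P Q n p / F (n+1) p)) - dx - 2 * (coef_b n F P Q p)\<^sup>2 * coef_a n F P Q p = 0"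
    using top unfolding dx_def
    by (simp add: tQ_def xQ_def xF_def coef_a_def coef_b_def coef_d_def ext_def Let_def
        field_simps power2_eq_square)
  ultimately show ?thesis
    by blast
qed

theorem theorem1:
  fixes n :: nat and U :: "(real \<times> real) set" and F P Q :: field2
  assumes "open U"
    and "\<forall>p\<in>U. F (n+1) p \<noteq> 0"
    and "compatible_solution n U F P Q"
  defines "a \<equiv> coef_a n F P Q" and "b \<equiv> coef_b n F P Q"
  shows "smooth_on2 U a \<and> smooth_on2 U b \<and>
    (\<exists>ax axx adot bx bxx bdot. \<forall>x t. (x, t) \<in> U \<longrightarrow>
       ((\<lambda>y. a (y, t)) has_vector_derivative ax (x, t)) (at x) \<and>
       ((\<lambda>y. ax (y, t)) has_vector_derivative axx (x, t)) (at x) \<and>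
       ((\<lambda>s. a (x, s)) has_vector_derivative adot (x, t)) (at t) \<and>
       ((\<lambda>y. b (y, t)) has_vector_derivative bx (x, t)) (at x) \<and>
       ((\<lambda>y. bx (y, t)) has_vector_derivative bxx (x, t)) (at x) \<and>
       ((\<lambda>s. b (x, s)) has_vector_derivative bdot (x, t)) (at t) \<and>
       \<i> * adot (x, t) + axx (x, t) + 2 * (a (x, t))^2 * b (x, t) = 0 \<and>
       \<i> * bdot (x, t) - bxx (x, t) - 2 * (b (x, t))^2 * a (x, t) = 0)"
proof -
  note top = assms(2)
  have sol: "\<forall>p\<in>U. solves_at n F P Q p"
    using assms(3) by (simp add: compatible_solution_iff_solves_at)
  define adot where "adot p = tP n F P Q n p / F (n+1) p" for p
  define bdot where "bdot p = - (tQ n F P Q n p / F (n+1) p)" for p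
  have a_partials: "\<forall>p\<in>U. has_partials a (coef_c n F P Q p) (adot p) p"
    and b_partials: "\<forall>p\<in>U. has_partials b (coef_d n F P Q p) (bdot p) p"
    using sol top coef_a_partials coef_b_partials by (simp_all add: a_def b_def adot_def bdot_def)
  have "\<forall>p\<in>U. \<exists>axx ct. has_partials (coef_c n F P Q) axx ct p \<and>
          \<i> * adot p + axx + 2 * (a p)\<^sup>2 * b p = 0"
    using sol top coef_a_nls_equation by (simp add: a_def b_def adot_def)
  then obtain axx where a_eq: "\<forall>p\<in>U. (\<exists>ct. has_partials (coef_c n F P Q) (axx p) ct p) \<and>
          \<i> * adot p + axx p + 2 * (a p)\<^sup>2 * b p = 0"
    by (metis bchoice)
  have "\<forall>p\<in>U. \<exists>bxx dt. has_partials (coef_d n F P Q) bxx dt p \<and>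
          \<i> * bdot p - bxx - 2 * (b p)\<^sup>2 * a p = 0"
    using sol top coef_b_nls_equation by (simp add: a_def b_def bdot_def)
  then obtain bxx where b_eq: "\<forall>p\<in>U. (\<exists>dt. has_partials (coef_d n F P Q) (bxx p) dt p) \<and>
          \<i> * bdot p - bxx p - 2 * (b p)\<^sup>2 * a p = 0"
    by (metis bchoice)
  have smooth: "smooth_on2 U a" "smooth_on2 U b"
    using smooth_on2_coef_a_coef_b[OF sol top] by (simp_all add: a_def b_def)
  show ?thesis
    by (intro conjI smooth,
        rule exI[of _ "coef_c n F P Q"], rule exI[of _ axx], rule exI[of _ adot],
        rule exI[of _ "coef_d n F P Q"], rule exI[of _ bxx], rule exI[of _ bdot])
      (use a_partials b_partials a_eq b_eq in \<open>blast intro: has_partials_imp_has_vector_derivative_x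
        has_partials_imp_has_vector_derivative_t\<close>)
qed

end
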